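(* Let $\Gamma$ be a cubic ($3$-regular) finite connected undirected graph with girth $g(\Gamma)\ge5$, and let $(u_{ij})$ be the generators of $C(G_{aut}^+(\Gamma))$. Then $u_{ij}u_{kl}=u_{kl}u_{ij}$ for all vertices $i,j,k,l$ with $d(i,k)=2=d(j,l)$.
   Context: $d$ is the graph distance; the girth is the length of a shortest cycle. For a finite simple undirected graph $\Gamma=(V,E)$ with $V=\{1,\dots,n\}$, $C(G_{aut}^+(\Gamma))$ is the universal unital $C^*$-algebra generated by $u_{ij}$, $1\le i,j\le n$, with relations: (R1) $u_{ij}=u_{ij}^*=u_{ij}^2$; (R2) $\sum_{l} u_{il}=1=\sum_{l} u_{li}$ for all $i$; (R3) $u_{ij}u_{kl}=u_{kl}u_{ij}=0$ whenever exactly one of $(i,k)\in E$, $(j,l)\in E$ holds. *)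

theory Defs
  imports "HOL-Analysis.Analysis" "HOL-Library.Extended_Nat"
begin

text \<open>A unital complex C*-algebra: a unital real Banach algebra, equipped with
  multiplication by the imaginary unit (making it a complex Banach algebra) and an
  antilinear anti-multiplicative involution satisfying the C*-identity.\<close>

class cstar_algebra = real_normed_algebra_1 + banach +
  fixes cstar :: "'a \<Rightarrow> 'a"
    and imult :: "'a \<Rightarrow> 'a"
  assumes imult_imult: "imult (imult x) = - x"
    and imult_add: "imult (x + y) = imult x + imult y"
    and imult_scaleR: "imult (scaleR r x) = scaleR r (imult x)"
    and imult_mult_left: "imult (x * y) = imult x * y"
    and imult_mult_right: "imult (x * y) = x * imult y"
    and norm_imult: "norm (imult x) = norm x"
    and cstar_cstar: "cstar (cstar x) = x"
    and cstar_add: "cstar (x + y) = cstar x + cstar y"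
    and cstar_scaleR: "cstar (scaleR r x) = scaleR r (cstar x)"
    and cstar_imult: "cstar (imult x) = - imult (cstar x)"
    and cstar_mult: "cstar (x * y) = cstar y * cstar x"
    and cstar_identity: "norm (cstar x * x) = (norm x)^2"

definition qaut_rels ::
  "nat \<Rightarrow> (nat \<Rightarrow> nat \<Rightarrow> bool) \<Rightarrow> (nat \<Rightarrow> nat \<Rightarrow> 'a::cstar_algebra) \<Rightarrow> bool" where
  "qaut_rels n E u \<longleftrightarrow>
     (\<forall>i\<in>{1..n}. \<forall>j\<in>{1..n}. u i j = cstar (u i j) \<and> u i j = u i j * u i j) \<and>
     (\<forall>i\<in>{1..n}. (\<Sum>l\<in>{1..n}. u i l) = 1 \<and> (\<Sum>l\<in>{1..n}. u l i) = 1) \<and>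
     (\<forall>i\<in>{1..n}. \<forall>j\<in>{1..n}. \<forall>k\<in>{1..n}. \<forall>l\<in>{1..n}.
        (E i k \<noteq> E j l) \<longrightarrow> u i j * u k l = 0 \<and> u k l * u i j = 0)"

definition simple_graph :: "nat \<Rightarrow> (nat \<Rightarrow> nat \<Rightarrow> bool) \<Rightarrow> bool" where
  "simple_graph n E \<longleftrightarrow>
     (\<forall>i j. E i j \<longrightarrow> i \<in> {1..n} \<and> j \<in> {1..n}) \<and>
     (\<forall>i j. E i j \<longrightarrow> E j i) \<and> (\<forall>i. \<not> E i i)"

definition is_walk :: "nat \<Rightarrow> (nat \<Rightarrow> nat \<Rightarrow> bool) \<Rightarrow> nat list \<Rightarrow> bool" where
  "is_walk n E p \<longleftrightarrow> p \<noteq> [] \<and> set p \<subseteq> {1..n} \<and>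
     (\<forall>m. Suc m < length p \<longrightarrow> E (p ! m) (p ! Suc m))"

text \<open>Graph distance (number of edges of a shortest walk; \<infinity> if none).\<close>
definition gdist :: "nat \<Rightarrow> (nat \<Rightarrow> nat \<Rightarrow> bool) \<Rightarrow> nat \<Rightarrow> nat \<Rightarrow> enat" where
  "gdist n E i k = (INF p \<in> {p. is_walk n E p \<and> hd p = i \<and> last p = k}. enat (length p - 1))"

definition connected_graph :: "nat \<Rightarrow> (nat \<Rightarrow> nat \<Rightarrow> bool) \<Rightarrow> bool" where
  "connected_graph n E \<longleftrightarrow>
     (\<forall>i\<in>{1..n}. \<forall>k\<in>{1..n}. \<exists>p. is_walk n E p \<and> hd p = i \<and> last p = k)"

definition cubic :: "nat \<Rightarrow> (nat \<Rightarrow> nat \<Rightarrow> bool) \<Rightarrow> bool" where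
  "cubic n E \<longleftrightarrow> (\<forall>i\<in>{1..n}. card {j\<in>{1..n}. E i j} = 3)"

text \<open>A cycle: list of at least 3 distinct vertices, consecutive ones adjacent and the
  last adjacent to the first. Its length is the number of vertices (= number of edges).\<close>
definition is_cycle :: "nat \<Rightarrow> (nat \<Rightarrow> nat \<Rightarrow> bool) \<Rightarrow> nat list \<Rightarrow> bool" where
  "is_cycle n E c \<longleftrightarrow> length c \<ge> 3 \<and> distinct c \<and> is_walk n E c \<and> E (last c) (hd c)"

definition girth :: "nat \<Rightarrow> (nat \<Rightarrow> nat \<Rightarrow> bool) \<Rightarrow> enat" where
  "girth n E = (INF c \<in> {c. is_cycle n E c}. enat (length c))"

end

theory Submission imports Defs begin

text \<open>Girth at least 5 means that two distinct vertices have at most one common neighbour.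
  Inserting a row or column sum of the magic unitary between two generators therefore
  collapses to a single term: u a b * u s d = u a b * u p q * u s d along paths a-p-s and
  b-q-d with a \<noteq> s or b \<noteq> d. For d = b, summing over the three neighbours q of b gives
  x = 3x for x = u a b * u s b, so generators at distance 2 in a common row or column are
  orthogonal; from this, u a b commutes with u p q for edges a-p and b-q. Finally, for paths
  i-p-k and j-q-l the product X = u i j * u k l satisfies X = X * u p q. Expanding u p q
  along column j over the three neighbours of p, two of the terms vanish and
  X = u i j * u p q * u k l * u p q * u i j is self-adjoint, so X = cstar X = u k l * u i j.\<close>

lemma simple_graph_edge_vertices:
  "simple_graph n E \<Longrightarrow> E x y \<Longrightarrow> x \<in> {1..n} \<and> y \<in> {1..n}"
  unfolding simple_graph_def by blast

lemma simple_graph_sym: "simple_graph n E \<Longrightarrow> E x y \<Longrightarrow> E y x"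
  unfolding simple_graph_def by blast

lemma simple_graph_irrefl: "simple_graph n E \<Longrightarrow> \<not> E x x"
  unfolding simple_graph_def by blast

lemma girth_le_cycle_length: "is_cycle n E c \<Longrightarrow> girth n E \<le> enat (length c)"
  unfolding girth_def by (rule INF_lower) simp

lemma girth_ge_5_common_neighbour_unique:
  assumes G: "simple_graph n E" and girth: "girth n E \<ge> 5"
    and "E a p" "E p s" "E a p'" "E p' s" "a \<noteq> s"
  shows "p = p'"
proof (rule ccontr)
  assume "p \<noteq> p'"
  then have "is_cycle n E [a, p, s, p']"
    using assms simple_graph_irrefl[OF G] simple_graph_sym[OF G] simple_graph_edge_vertices[OF G]
    by (auto simp: is_cycle_def is_walk_def less_Suc_eq numeral_eq_Suc)
  with girth have "(5::enat) \<le> 4"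
    using girth_le_cycle_length order_trans by fastforce
  then show False by simp
qed

lemma gdist_eq_enat_obtains_walk:
  assumes "gdist n E x y = enat d"
  obtains p where "is_walk n E p" "hd p = x" "last p = y" "length p = Suc d"
proof -
  let ?W = "{p. is_walk n E p \<and> hd p = x \<and> last p = y}"
  have "?W \<noteq> {}"
  proof
    assume "?W = {}"
    then have "gdist n E x y = \<infinity>"
      unfolding gdist_def by (simp only: image_empty Inf_empty top_enat_def)
    with assms show False by simp
  qed
  then have "gdist n E x y \<in> (\<lambda>p. enat (length p - 1)) ` ?W"
    unfolding gdist_def by (auto intro: wellorder_InfI)
  then obtain p where "p \<in> ?W" "length p - 1 = d"
    using assms by auto
  moreover have "p \<noteq> []"
    using \<open>p \<in> ?W\<close> by (simp add: is_walk_def)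
  ultimately show thesis
    using that by auto
qed

lemma gdist_eq_2_common_neighbour:
  assumes "gdist n E x y = 2" "x \<in> {1..n}"
  obtains p where "E x p" "E p y" "x \<noteq> y"
proof -
  obtain w where w: "is_walk n E w" "hd w = x" "last w = y" "length w = 3"
    using gdist_eq_enat_obtains_walk[of n E x y 2] assms(1) by (auto simp: numeral_eq_enat)
  then obtain p where "w = [x, p, y]"
    by (cases w rule: rev_cases) (auto simp: length_Suc_conv numeral_eq_Suc)
  moreover have "x \<noteq> y"
  proof
    assume "x = y"
    then have "gdist n E x y \<le> enat (length [x] - 1)"
      unfolding gdist_def using assms(2) by (intro INF_lower) (simp add: is_walk_def)
    with assms(1) show False by (simp add: zero_enat_def[symmetric])
  qed
  moreover have "E x p" "E p y"
  proof -
    have "\<And>m. Suc m < 3 \<Longrightarrow> E ([x, p, y] ! m) ([x, p, y] ! Suc m)"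
      using w(1) \<open>w = [x, p, y]\<close> by (simp add: is_walk_def)
    from this[of 0] this[of 1] show "E x p" "E p y" by simp_all
  qed
  ultimately show thesis
    using that by blast
qed

lemma card_3_obtain_third:
  assumes "card A = 3" "x \<in> A" "y \<in> A" "x \<noteq> y"
  obtains z where "A = {x, y, z}" "z \<noteq> x" "z \<noteq> y"
  using assms unfolding card_3_iff by auto

lemma scaleR_eq_self_imp_zero:
  fixes x :: "'a::real_vector"
  assumes "c *\<^sub>R x = x" "c \<noteq> 1"
  shows "x = 0"
proof -
  have "(c - 1) *\<^sub>R x = 0"
    using assms(1) by (simp add: scaleR_left_diff_distrib)
  with assms(2) show ?thesis by simp
qed

lemma cstar_selfadjoint_mult_commute:
  fixes x y :: "'a::cstar_algebra"
  assumes "cstar x = x" "cstar y = y" "cstar (x * y) = x * y"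
  shows "x * y = y * x"
  using assms by (metis cstar_mult)

definition nbhd :: "nat \<Rightarrow> (nat \<Rightarrow> nat \<Rightarrow> bool) \<Rightarrow> nat \<Rightarrow> nat set" where
  "nbhd n E x = {y \<in> {1..n}. E x y}"

locale qaut_graph =
  fixes n :: nat and E :: "nat \<Rightarrow> nat \<Rightarrow> bool" and u :: "nat \<Rightarrow> nat \<Rightarrow> 'a::cstar_algebra"
  assumes simple: "simple_graph n E" and rels: "qaut_rels n E u"
begin

lemma edge_vertices: "E x y \<Longrightarrow> x \<in> {1..n} \<and> y \<in> {1..n}"
  using simple_graph_edge_vertices[OF simple] .

lemma edge_sym: "E x y \<Longrightarrow> E y x"
  using simple_graph_sym[OF simple] .

lemma u_selfadjoint: "x \<in> {1..n} \<Longrightarrow> y \<in> {1..n} \<Longrightarrow> cstar (u x y) = u x y"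
  using rels unfolding qaut_rels_def by metis

lemma u_idem: "x \<in> {1..n} \<Longrightarrow> y \<in> {1..n} \<Longrightarrow> u x y * u x y = u x y"
  using rels unfolding qaut_rels_def by metis

lemma u_row_sum: "x \<in> {1..n} \<Longrightarrow> (\<Sum>y\<in>{1..n}. u x y) = 1"
  using rels unfolding qaut_rels_def by blast

lemma u_col_sum: "y \<in> {1..n} \<Longrightarrow> (\<Sum>x\<in>{1..n}. u x y) = 1"
  using rels unfolding qaut_rels_def by blast

lemma u_mult_u_eq_zero:
  "\<lbrakk>x \<in> {1..n}; y \<in> {1..n}; z \<in> {1..n}; w \<in> {1..n}; E x z \<noteq> E y w\<rbrakk> \<Longrightarrow> u x y * u z w = 0"
  using rels unfolding qaut_rels_def by blast

text \<open>The relations are invariant under transposition, so every lemma has a row/column dual.\<close>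

lemma transpose: "qaut_graph n E (\<lambda>x y. u y x)"
proof -
  have "qaut_rels n E (\<lambda>x y. u y x)"
    using rels unfolding qaut_rels_def by (auto simp del: One_nat_def)
  then show ?thesis
    using simple by unfold_locales
qed

lemma u_expand_row_nbhd:
  assumes "E a p" "b \<in> {1..n}"
  shows "u a b * C = (\<Sum>t\<in>nbhd n E b. u a b * u p t * C)"
proof -
  have "u a b * C = u a b * (\<Sum>t\<in>{1..n}. u p t) * C"
    using u_row_sum[of p] edge_vertices[OF assms(1)] by simp
  also have "\<dots> = (\<Sum>t\<in>{1..n}. u a b * u p t * C)"
    by (simp add: sum_distrib_left sum_distrib_right)
  also have "\<dots> = (\<Sum>t\<in>nbhd n E b. u a b * u p t * C)"
    using assms edge_vertices[OF assms(1)]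
    by (intro sum.mono_neutral_right) (auto simp: nbhd_def u_mult_u_eq_zero)
  finally show ?thesis .
qed

lemma u_expand_col_nbhd:
  assumes "p \<in> {1..n}" "E q b"
  shows "C * u p q = (\<Sum>s\<in>nbhd n E p. C * u p q * u s b)"
proof -
  have "C * u p q = (\<Sum>s\<in>{1..n}. C * u p q * u s b)"
    using u_col_sum[of b] edge_vertices[OF assms(2)]
    by (simp add: sum_distrib_left[symmetric] mult.assoc)
  also have "\<dots> = (\<Sum>s\<in>nbhd n E p. C * u p q * u s b)"
    using assms edge_vertices[OF assms(2)]
    by (intro sum.mono_neutral_right) (auto simp: nbhd_def u_mult_u_eq_zero mult.assoc)
  finally show ?thesis .
qed

end

locale cubic_qaut_graph = qaut_graph +
  assumes cubic: "cubic n E" and girth: "girth n E \<ge> 5"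
begin

lemma transpose: "cubic_qaut_graph n E (\<lambda>x y. u y x)"
  using qaut_graph.transpose[OF qaut_graph_axioms] cubic girth
  by (simp add: cubic_qaut_graph_def cubic_qaut_graph_axioms_def)

lemma u_mult_u_insert_middle_row:
  assumes "E a p" "E p s" "E b q" "E q d" "b \<noteq> d"
  shows "u a b * u s d = u a b * u p q * u s d"
proof -
  have V: "a \<in> {1..n}" "p \<in> {1..n}" "s \<in> {1..n}" "b \<in> {1..n}" "q \<in> {1..n}" "d \<in> {1..n}"
    using assms edge_vertices by blast+
  have "u a b * u s d = (\<Sum>t\<in>nbhd n E b. u a b * u p t * u s d)"
    using u_expand_row_nbhd[OF assms(1) V(4)] .
  also have "\<dots> = (\<Sum>t\<in>{q}. u a b * u p t * u s d)"
  proof (intro sum.mono_neutral_right ballI)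
    fix t assume t: "t \<in> nbhd n E b - {q}"
    then have "\<not> E t d"
      using girth_ge_5_common_neighbour_unique[OF simple girth, of b t d q] assms
      by (auto simp: nbhd_def)
    then have "u p t * u s d = 0"
      using t V assms(2) by (auto simp: nbhd_def u_mult_u_eq_zero)
    then show "u a b * u p t * u s d = 0"
      by (simp add: mult.assoc)
  qed (use assms V in \<open>auto simp: nbhd_def\<close>)
  finally show ?thesis by simp
qed

lemma u_mult_u_insert_middle_col:
  assumes "E a p" "E p s" "E b q" "E q d" "a \<noteq> s"
  shows "u a b * u s d = u a b * u p q * u s d"
  using cubic_qaut_graph.u_mult_u_insert_middle_row[OF transpose assms(3,4,1,2,5)] .

lemma u_col_orthogonal:
  assumes "E a p" "E p s" "a \<noteq> s" "b \<in> {1..n}"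
  shows "u a b * u s b = 0"
proof -
  let ?x = "u a b * u s b"
  have "?x = (\<Sum>t\<in>nbhd n E b. u a b * u p t * u s b)"
    using u_expand_row_nbhd[OF assms(1,4)] .
  also have "\<dots> = (\<Sum>t\<in>nbhd n E b. ?x)"
    using u_mult_u_insert_middle_col[OF assms(1,2) _ _ assms(3)] edge_sym
    by (intro sum.cong) (auto simp: nbhd_def)
  also have "\<dots> = 3 *\<^sub>R ?x"
    using cubic assms(4) by (simp add: cubic_def nbhd_def scaleR_conv_of_real)
  finally show ?thesis
    by (intro scaleR_eq_self_imp_zero[of 3]) simp_all
qed

lemma u_row_orthogonal:
  assumes "E b q" "E q d" "b \<noteq> d" "a \<in> {1..n}"
  shows "u a b * u a d = 0"
  using cubic_qaut_graph.u_col_orthogonal[OF transpose assms] .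

lemma u_adjacent_commute:
  assumes "E a p" "E b q"
  shows "u a b * u p q = u p q * u a b"
proof -
  have V: "a \<in> {1..n}" "p \<in> {1..n}" "b \<in> {1..n}" "q \<in> {1..n}"
    using assms edge_vertices by blast+
  let ?X = "u a b * u p q"
  have "?X = (\<Sum>s\<in>nbhd n E p. ?X * u s b)"
    using u_expand_col_nbhd[OF V(2) edge_sym[OF assms(2)]] .
  also have "\<dots> = (\<Sum>s\<in>{a}. ?X * u s b)"
  proof (intro sum.mono_neutral_right ballI)
    fix s assume s: "s \<in> nbhd n E p - {a}"
    then have "?X * u s b = u a b * u s b"
      using u_mult_u_insert_middle_col[OF assms(1) _ assms(2) edge_sym[OF assms(2)]]
      by (auto simp: nbhd_def)
    also have "\<dots> = 0"
      using u_col_orthogonal[OF assms(1) _ _ V(3)] s by (auto simp: nbhd_def)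
    finally show "?X * u s b = 0" .
  qed (use assms V edge_sym in \<open>auto simp: nbhd_def\<close>)
  finally have X: "?X = u a b * u p q * u a b" by simp
  have "cstar ?X = ?X"
    by (subst (1 2) X) (simp add: cstar_mult mult.assoc u_selfadjoint[OF V(1,3)] u_selfadjoint[OF V(2,4)])
  then show ?thesis
    using cstar_selfadjoint_mult_commute u_selfadjoint V by blast
qed

lemma u_mult_u_absorbs_middle:
  assumes "E i p" "E p k" "E j q" "E q l" "j \<noteq> l"
  shows "u i j * u k l * u p q = u i j * u k l"
proof -
  have V: "p \<in> {1..n}" "q \<in> {1..n}"
    using assms edge_vertices by blast+
  have middle: "u i j * u k l = u i j * u p q * u k l"
    using u_mult_u_insert_middle_row[OF assms] .
  have "u i j * u k l * u p q = u i j * u p q * (u p q * u k l)"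
    using middle u_adjacent_commute[OF edge_sym[OF assms(2)] edge_sym[OF assms(4)]]
    by (simp add: mult.assoc)
  also have "\<dots> = u i j * (u p q * u p q) * u k l"
    by (simp add: mult.assoc)
  also have "\<dots> = u i j * u k l"
    using middle u_idem[OF V] by simp
  finally show ?thesis .
qed

lemma u_expand_col_nbhd_3:
  assumes "nbhd n E p = {i, k, m}" "i \<noteq> k" "m \<noteq> i" "m \<noteq> k" "E q x"
  shows "C * u p q = C * u p q * u i x + C * u p q * u k x + C * u p q * u m x"
proof -
  have "i \<in> nbhd n E p"
    using assms(1) by simp
  then have "p \<in> {1..n}"
    using edge_vertices by (auto simp: nbhd_def)
  then have "C * u p q = (\<Sum>s\<in>nbhd n E p. C * u p q * u s x)"
    by (rule u_expand_col_nbhd[OF _ assms(5)])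
  also have "\<dots> = C * u p q * u i x + C * u p q * u k x + C * u p q * u m x"
    unfolding assms(1) using assms(2-4) by (simp add: add.assoc)
  finally show ?thesis .
qed

lemma u_mult_u_mult_third_neighbour:
  assumes N: "nbhd n E p = {i, k, m}" "i \<noteq> k" "m \<noteq> i" "m \<noteq> k"
    and ip: "E i p" and pk: "E p k" and jq: "E j q" and ql: "E q l" and "j \<noteq> l"
  shows "u i j * u k l * u m j = 0"
proof -
  have "m \<in> nbhd n E p"
    using N(1) by simp
  then have V: "i \<in> {1..n}" "j \<in> {1..n}" "m \<in> {1..n}" and pm: "E p m"
    using ip jq edge_vertices by (auto simp: nbhd_def)
  let ?P = "u p q"
  have P_expand: "?P * u i l + ?P * u k l + ?P * u m l = ?P"
    using u_expand_col_nbhd_3[OF N ql, of 1] unfolding mult_1_left by (rule sym)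
  have "?P * u k l = (?P * u i l + ?P * u k l + ?P * u m l) - ?P * u i l - ?P * u m l"
    by simp
  then have P_kl: "?P * u k l = ?P - ?P * u i l - ?P * u m l"
    by (simp only: P_expand)
  have "u i j * u k l * u m j = u i j * (?P * u k l) * u m j"
    using u_mult_u_insert_middle_row[OF ip pk jq ql \<open>j \<noteq> l\<close>] by (simp add: mult.assoc)
  also have "\<dots> = u i j * ?P * u m j - u i j * ?P * u i l * u m j - u i j * ?P * u m l * u m j"
    unfolding P_kl by (simp add: algebra_simps)
  also have "\<dots> = ?P * (u i j * u m j) - ?P * (u i j * u i l) * u m j - u i j * ?P * (u m l * u m j)"
    using u_adjacent_commute[OF ip jq] by (simp add: mult.assoc)
  also have "\<dots> = 0"
    using u_col_orthogonal[OF ip pm _ V(2)] u_row_orthogonal[OF jq ql _ V(1)]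
      u_row_orthogonal[OF edge_sym[OF ql] edge_sym[OF jq] _ V(3)] N(3) \<open>j \<noteq> l\<close>
    by simp
  finally show ?thesis .
qed

lemma u_commute_at_distance_2:
  assumes ip: "E i p" and pk: "E p k" and "i \<noteq> k"
    and jq: "E j q" and ql: "E q l" and "j \<noteq> l"
  shows "u i j * u k l = u k l * u i j"
proof -
  have V: "i \<in> {1..n}" "j \<in> {1..n}" "k \<in> {1..n}" "l \<in> {1..n}" "p \<in> {1..n}" "q \<in> {1..n}"
    using assms edge_vertices by blast+
  obtain m where N: "nbhd n E p = {i, k, m}" "i \<noteq> k" "m \<noteq> i" "m \<noteq> k"
    using card_3_obtain_third[of "nbhd n E p" i k] cubic V assms edge_sym
    by (auto simp: cubic_def nbhd_def)
  let ?P = "u p q" and ?X = "u i j * u k l"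
  have XP: "?X * ?P = ?X"
    using u_mult_u_absorbs_middle[OF ip pk jq ql \<open>j \<noteq> l\<close>] .
  have "?X * u k j = u i j * ?P * (u k l * u k j)"
    using u_mult_u_insert_middle_row[OF ip pk jq ql \<open>j \<noteq> l\<close>] by (simp add: mult.assoc)
  then have Xk: "?X * ?P * u k j = 0"
    using XP u_row_orthogonal[OF edge_sym[OF ql] edge_sym[OF jq] _ V(3)] \<open>j \<noteq> l\<close> by simp
  have Xm: "?X * ?P * u m j = 0"
    using XP u_mult_u_mult_third_neighbour[OF N ip pk jq ql \<open>j \<noteq> l\<close>] by simp
  have "?X = ?X * ?P"
    using XP by simp
  also have "\<dots> = ?X * ?P * u i j + ?X * ?P * u k j + ?X * ?P * u m j"
    using u_expand_col_nbhd_3[OF N edge_sym[OF jq]] .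
  also have "\<dots> = u i j * ?P * u k l * ?P * u i j"
    using Xk Xm by (simp only: u_mult_u_insert_middle_row[OF ip pk jq ql \<open>j \<noteq> l\<close>] add_0_right)
  finally have "cstar ?X = ?X"
    by (simp add: cstar_mult mult.assoc u_selfadjoint[OF V(1,2)] u_selfadjoint[OF V(3,4)]
        u_selfadjoint[OF V(5,6)])
  then show ?thesis
    using cstar_selfadjoint_mult_commute u_selfadjoint V by blast
qed

end

theorem lemma5p2:
  fixes n :: nat and E :: "nat \<Rightarrow> nat \<Rightarrow> bool"
    and u :: "nat \<Rightarrow> nat \<Rightarrow> 'a::cstar_algebra"
  assumes "simple_graph n E"
    and "cubic n E"
    and "connected_graph n E"
    and "girth n E \<ge> 5"
    and "qaut_rels n E u"
    and "i \<in> {1..n}" "j \<in> {1..n}" "k \<in> {1..n}" "l \<in> {1..n}"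
    and "gdist n E i k = 2" "gdist n E j l = 2"
  shows "u i j * u k l = u k l * u i j"
proof -
  interpret cubic_qaut_graph n E u
    using assms by unfold_locales
  obtain p where "E i p" "E p k" "i \<noteq> k"
    using gdist_eq_2_common_neighbour assms(6,10) by blast
  moreover obtain q where "E j q" "E q l" "j \<noteq> l"
    using gdist_eq_2_common_neighbour assms(7,11) by blast
  ultimately show ?thesis
    by (rule u_commute_at_distance_2)
qed

end
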